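(* Fix integers $N\ge 1$, $K\ge 1$ and an adjacency matrix $\mathbb H$. For every policy $\pi$ there exists an instance $\nu\in\mathcal E_0$ such that $$\mathcal R^{\mathrm{naive}}_\nu(T,\pi)=\Omega\Big(\tfrac{1}{\sqrt N}\big(T\wedge \sqrt{K^N T}\big)\Big).$$
   Context: Bandit with network interference: $\mathcal K=[K]$ is the arm set, $\mathcal U=[N]$ the unit set, $T$ the horizon, $\mathbb H=(h_{ij})$ a fixed adjacency matrix among units. In each round $t\in[T]$ a policy chooses a super arm $A_t=(a_{1,t},\dots,a_{N,t})\in\mathcal K^{\mathcal U}$ and observes, for every unit $i$, the reward $r_{i,t}(A_t)=Y_i(A_t)+\eta_{i,t}$, where the potential outcomes $Y_i(A)\in[0,1]$ ($i\in\mathcal U$, $A\in\mathcal K^{\mathcal U}$) are unknown fixed numbers and the noises $\eta_{i,t}$ are i.i.d. zero-mean 1-sub-Gaussian. An instance $\nu$ is any admissible choice of the reward distributions of the $r_i(A)$; $\mathcal E_0$ is the set of all instances. A policy $\pi=(\pi_1,\dots,\pi_T)$ maps the history $\mathcal H_{t-1}=\{A_1,(r_{i,1}(A_1))_i,\dots,A_{t-1},(r_{i,t-1}(A_{t-1}))_i\}$ to a distribution of $A_t$. The naive regret is $$\mathcal R^{\mathrm{naive}}_\nu(T,\pi)=\frac TN\sum_{i\in\mathcal U}Y_i(A^* )-\mathbb E_\pi\Big[\frac1N\sum_{t\in[T]}\sum_{i\in\mathcal U}r_{i,t}(A_t)\Big],\qquad A^*\in\arg\max_{A\in\mathcal K^{\mathcal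 U}}\frac1N\sum_{i\in\mathcal U}Y_i(A).$$ $a\wedge b=\min\{a,b\}$; $\Omega$ hides a positive constant independent of $T,K,N$. *)

theory Defs
  imports "HOL-Probability.Probability"
begin

text \<open>Units are 0..N-1, arms are 0..K-1, rounds are 0..T-1.
  A super arm is an extensional function from units to arms.\<close>

definition superarms :: "nat \<Rightarrow> nat \<Rightarrow> (nat \<Rightarrow> nat) set" where
  "superarms N K = PiE {..<N} (\<lambda>_. {..<K})"

text \<open>An instance: potential outcomes Y i A in [0,1] and a common noise law P,
  zero-mean and 1-sub-Gaussian; the reward of unit i under A is Y i A + noise,
  noises i.i.d. over units and rounds.\<close>

definition admissible_instance ::
  "nat \<Rightarrow> nat \<Rightarrow> (nat \<Rightarrow> (nat \<Rightarrow> nat) \<Rightarrow> real) \<Rightarrow> real measure \<Rightarrow> bool" where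
  "admissible_instance N K Y P \<longleftrightarrow>
     (\<forall>i<N. \<forall>A\<in>superarms N K. 0 \<le> Y i A \<and> Y i A \<le> 1) \<and>
     prob_space P \<and> sets P = sets borel \<and>
     integrable P (\<lambda>x. x) \<and> (\<integral>x. x \<partial>P) = 0 \<and>
     (\<forall>l::real. integrable P (\<lambda>x. exp (l * x)) \<and> (\<integral>x. exp (l * x) \<partial>P) \<le> exp (l\<^sup>2 / 2))"

definition reward_measure ::
  "nat \<Rightarrow> (nat \<Rightarrow> (nat \<Rightarrow> nat) \<Rightarrow> real) \<Rightarrow> real measure \<Rightarrow> (nat \<Rightarrow> nat) \<Rightarrow> (nat \<Rightarrow> real) measure" where
  "reward_measure N Y P A = PiM {..<N} (\<lambda>i. distr P borel (\<lambda>x. Y i A + x))"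

text \<open>Histories before round t: functions on {..<t} giving (super arm, reward vector).\<close>
type_synonym history = "nat \<Rightarrow> (nat \<Rightarrow> nat) \<times> (nat \<Rightarrow> real)"

definition histM :: "nat \<Rightarrow> nat \<Rightarrow> nat \<Rightarrow> history measure" where
  "histM N K t = PiM {..<t} (\<lambda>_. count_space (superarms N K) \<Otimes>\<^sub>M PiM {..<N} (\<lambda>_. (borel :: real measure)))"

type_synonym policy = "nat \<Rightarrow> history \<Rightarrow> (nat \<Rightarrow> nat) pmf"

definition admissible_policy :: "nat \<Rightarrow> nat \<Rightarrow> policy \<Rightarrow> bool" where
  "admissible_policy N K \<pi> \<longleftrightarrow>
     (\<forall>t h. set_pmf (\<pi> t h) \<subseteq> superarms N K) \<and>
     (\<forall>t A. (\<lambda>h. pmf (\<pi> t h) A) \<in> borel_measurable (histM N K t))"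

text \<open>exp_reward ... k t h = expected value of (1/N) * sum of all unit rewards
  collected in the k rounds t, ..., t+k-1, given history h before round t.\<close>
primrec exp_reward ::
  "nat \<Rightarrow> nat \<Rightarrow> (nat \<Rightarrow> (nat \<Rightarrow> nat) \<Rightarrow> real) \<Rightarrow> real measure \<Rightarrow> policy \<Rightarrow>
   nat \<Rightarrow> nat \<Rightarrow> history \<Rightarrow> real" where
  "exp_reward N K Y P \<pi> 0 t h = 0"
| "exp_reward N K Y P \<pi> (Suc k) t h =
     (\<Sum>A\<in>superarms N K. pmf (\<pi> t h) A *
        (\<integral>r. (1 / real N) * (\<Sum>i<N. r i) + exp_reward N K Y P \<pi> k (Suc t) (h(t := (A, r)))
          \<partial>reward_measure N Y P A))"

definition naive_regret ::
  "nat \<Rightarrow> nat \<Rightarrow> (nat \<Rightarrow> (nat \<Rightarrow> nat) \<Rightarrow> real) \<Rightarrow> real measure \<Rightarrow> policy \<Rightarrow> nat \<Rightarrow> real" where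
  "naive_regret N K Y P \<pi> T =
     real T * Max ((\<lambda>A. (1 / real N) * (\<Sum>i<N. Y i A)) ` superarms N K)
     - exp_reward N K Y P \<pi> T 0 (\<lambda>_. undefined)"

end

theory Submission
  imports Defs
begin

(* Take standard Gaussian noise and, for a super arm B and a gap \<Delta>, the bump instance in which
   every unit has mean reward 1/2, raised to 1/2 + \<Delta> whenever B is played. Its naive regret is
   \<Delta> (T - n_B), where n_B is the expected number of rounds playing B; let m_B be that number
   under the null instance \<Delta> = 0, so that the m_B sum to T. A round playing B yields N Gaussian
   observations shifted by \<Delta>, so a change of measure, round by round, bounds the Bernoulli
   divergence between affinely rescaled m_B and n_B by (N \<Delta>^2 / 2) m_B. Pinsker's inequality
   and AM-GM turn this into an upper bound on n_B - m_B; averaging over the K^N super arms gives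
   some B with n_B \<le> 3T/4, and \<Delta> = min (1/2) (sqrt (K^N / (N T)) / 24) gives the bound. *)

lemma PiM_density:
  fixes M :: "'i \<Rightarrow> 'a measure" and f :: "'i \<Rightarrow> 'a \<Rightarrow> real"
  assumes fin: "finite I"
    and prob: "\<And>i. prob_space (M i)"
    and prob_density: "\<And>i. prob_space (density (M i) (f i))"
    and meas: "\<And>i. f i \<in> borel_measurable (M i)"
    and nonneg: "\<And>i x. 0 \<le> f i x"
  shows "PiM I (\<lambda>i. density (M i) (f i)) = density (PiM I M) (\<lambda>x. ennreal (\<Prod>i\<in>I. f i (x i)))"
proof -
  interpret P: product_sigma_finite "\<lambda>i. density (M i) (f i)"
    unfolding product_sigma_finite_def using prob_density by (auto intro: prob_space_imp_sigma_finite)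
  interpret Q: product_sigma_finite M
    unfolding product_sigma_finite_def using prob by (auto intro: prob_space_imp_sigma_finite)
  have prod_ennreal_eq: "(\<lambda>x. ennreal (\<Prod>i\<in>I. f i (x i))) = (\<lambda>x. \<Prod>i\<in>I. ennreal (f i (x i)))"
    using nonneg by (auto simp: prod_ennreal)
  have factor_meas: "(\<lambda>x. ennreal (f i (x i))) \<in> borel_measurable (PiM I M)" if "i \<in> I" for i
    using measurable_component_singleton[OF that] by (rule measurable_compose) (use meas[of i] in simp)
  show ?thesis unfolding prod_ennreal_eq
  proof (rule P.PiM_eqI[symmetric, OF fin])
    show "sets (density (PiM I M) (\<lambda>x. \<Prod>i\<in>I. ennreal (f i (x i)))) = sets (PiM I (\<lambda>i. density (M i) (f i)))"
      by (subst sets_density, rule sets_PiM_cong) auto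
    fix A assume "\<And>i. i \<in> I \<Longrightarrow> A i \<in> sets (density (M i) (f i))"
    then have A: "\<And>i. i \<in> I \<Longrightarrow> A i \<in> sets (M i)" by simp
    have "emeasure (density (PiM I M) (\<lambda>x. \<Prod>i\<in>I. ennreal (f i (x i)))) (PiE I A)
        = (\<integral>\<^sup>+x. (\<Prod>i\<in>I. ennreal (f i (x i))) * indicator (PiE I A) x \<partial>PiM I M)"
      using A fin by (subst emeasure_density) (auto intro!: borel_measurable_prod_ennreal factor_meas)
    also have "\<dots> = (\<integral>\<^sup>+x. (\<Prod>i\<in>I. ennreal (f i (x i)) * indicator (A i) (x i)) \<partial>PiM I M)"
    proof (intro nn_integral_cong)
      fix x assume "x \<in> space (PiM I M)"
      then have "indicator (PiE I A) x = (\<Prod>i\<in>I. indicator (A i) (x i) :: ennreal)"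
        using fin by (auto simp: space_PiM indicator_def PiE_iff prod_ennreal)
      then show "(\<Prod>i\<in>I. ennreal (f i (x i))) * indicator (PiE I A) x
          = (\<Prod>i\<in>I. ennreal (f i (x i)) * indicator (A i) (x i))"
        by (simp add: prod.distrib)
    qed
    also have "\<dots> = (\<Prod>i\<in>I. (\<integral>\<^sup>+y. ennreal (f i y) * indicator (A i) y \<partial>M i))"
      using A meas by (subst Q.product_nn_integral_prod[OF fin]) auto
    also have "\<dots> = (\<Prod>i\<in>I. emeasure (density (M i) (f i)) (A i))"
      using A meas by (intro prod.cong refl) (simp add: emeasure_density)
    finally show "emeasure (density (PiM I M) (\<lambda>x. \<Prod>i\<in>I. ennreal (f i (x i)))) (PiE I A)
        = (\<Prod>i\<in>I. emeasure (density (M i) (f i)) (A i))" .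
  qed
qed

lemma integrable_integral_density_prob_space:
  fixes f :: "'a \<Rightarrow> real"
  assumes "prob_space (density M f)" "f \<in> borel_measurable M" "\<And>x. 0 \<le> f x"
  shows "integrable M f \<and> (\<integral>x. f x \<partial>M) = 1"
proof -
  have "emeasure (density M f) (space M) = 1"
    using prob_space.emeasure_space_1[OF assms(1)] by simp
  then have nn: "(\<integral>\<^sup>+x. ennreal (f x) \<partial>M) = ennreal 1"
    using assms(2) by (simp add: emeasure_density nn_integral_set_ennreal[symmetric] cong: nn_integral_cong)
  have nonneg: "AE x in M. 0 \<le> f x"
    using assms(3) by simp
  have int: "integrable M f"
    by (rule integrableI_nn_integral_finite[OF assms(2) nonneg nn])
  then have "ennreal (\<integral>x. f x \<partial>M) = ennreal 1"
    using nn_integral_eq_integral[OF int nonneg] nn by simp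
  then show ?thesis
    using int integral_nonneg_AE[OF nonneg] by simp
qed

lemma integrable_integral_weighted_between:
  fixes l v :: "'a \<Rightarrow> real"
  assumes l: "integrable M l" "(\<integral>x. l x \<partial>M) = 1" "\<And>x. x \<in> space M \<Longrightarrow> 0 \<le> l x"
    and v: "v \<in> borel_measurable M" "\<And>x. x \<in> space M \<Longrightarrow> a \<le> v x \<and> v x \<le> b"
  shows "integrable M (\<lambda>x. l x * v x) \<and> a \<le> (\<integral>x. l x * v x \<partial>M) \<and> (\<integral>x. l x * v x \<partial>M) \<le> b"
proof -
  have int: "integrable M (\<lambda>x. l x * v x)"
  proof (rule Bochner_Integration.integrable_bound)
    show "integrable M (\<lambda>x. (\<bar>a\<bar> + \<bar>b\<bar>) * l x)"
      using l(1) by simp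
    show "(\<lambda>x. l x * v x) \<in> borel_measurable M"
      using borel_measurable_integrable[OF l(1)] v(1) by simp
    show "AE x in M. norm (l x * v x) \<le> norm ((\<bar>a\<bar> + \<bar>b\<bar>) * l x)"
    proof (rule AE_I2)
      fix x assume x: "x \<in> space M"
      then have "\<bar>v x\<bar> \<le> \<bar>a\<bar> + \<bar>b\<bar>"
        using v(2)[OF x] by arith
      then show "norm (l x * v x) \<le> norm ((\<bar>a\<bar> + \<bar>b\<bar>) * l x)"
        using l(3)[OF x] by (simp add: abs_mult mult.commute mult_left_mono)
    qed
  qed
  have "(\<integral>x. l x * a \<partial>M) \<le> (\<integral>x. l x * v x \<partial>M)" "(\<integral>x. l x * v x \<partial>M) \<le> (\<integral>x. l x * b \<partial>M)"
    using l int v(2) by (intro integral_mono; force intro: mult_left_mono)+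
  then show ?thesis
    using int l(2) by simp
qed

lemma (in prob_space) integrable_integral_between:
  fixes g :: "'a \<Rightarrow> real"
  assumes "g \<in> borel_measurable M" "\<And>x. x \<in> space M \<Longrightarrow> a \<le> g x \<and> g x \<le> b"
  shows "integrable M g \<and> a \<le> (\<integral>x. g x \<partial>M) \<and> (\<integral>x. g x \<partial>M) \<le> b"
  using integrable_integral_weighted_between[of M "\<lambda>_. 1" g a b] assms by (simp add: prob_space)

lemma convex_combination_between:
  fixes x :: "'a \<Rightarrow> real"
  assumes "finite S" "\<And>A. A \<in> S \<Longrightarrow> 0 \<le> w A" "sum w S = 1"
    "\<And>A. A \<in> S \<Longrightarrow> a \<le> x A \<and> x A \<le> b"
  shows "a \<le> (\<Sum>A\<in>S. w A * x A) \<and> (\<Sum>A\<in>S. w A * x A) \<le> b"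
proof -
  have "(\<Sum>A\<in>S. w A * a) \<le> (\<Sum>A\<in>S. w A * x A)" "(\<Sum>A\<in>S. w A * x A) \<le> (\<Sum>A\<in>S. w A * b)"
    using assms by (auto intro!: sum_mono mult_left_mono)
  then show ?thesis
    using assms(3) by (simp add: sum_distrib_right[symmetric])
qed

section \<open>Gaussian noise\<close>

definition gauss_noise :: "real measure" where
  "gauss_noise = density lborel std_normal_density"

lemma prob_space_gauss_noise: "prob_space gauss_noise"
  using real_dist_normal_dist unfolding gauss_noise_def real_distribution_def by simp

lemma sets_gauss_noise [simp]: "sets gauss_noise = sets borel"
  unfolding gauss_noise_def by simp

lemma exp_mult_std_normal_density:
  "exp (l * x) * std_normal_density x = exp (l\<^sup>2 / 2) * normal_density l 1 x"
proof -
  have "l * x + (- x\<^sup>2 / 2) = l\<^sup>2 / 2 + (-(x - l)\<^sup>2 / 2)"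
    by (simp add: power2_eq_square field_simps)
  then have "exp (l * x) * exp (- x\<^sup>2 / 2) = exp (l\<^sup>2 / 2) * exp (-(x - l)\<^sup>2 / 2)"
    by (simp only: exp_add[symmetric])
  then show ?thesis
    unfolding normal_density_def by (simp add: field_simps)
qed

lemma gauss_noise_subgaussian:
  "prob_space gauss_noise \<and> sets gauss_noise = sets borel \<and>
     integrable gauss_noise (\<lambda>x. x) \<and> (\<integral>x. x \<partial>gauss_noise) = 0 \<and>
     (\<forall>l::real. integrable gauss_noise (\<lambda>x. exp (l * x)) \<and>
        (\<integral>x. exp (l * x) \<partial>gauss_noise) \<le> exp (l\<^sup>2 / 2))"
proof (intro conjI allI)
  show "prob_space gauss_noise" by (rule prob_space_gauss_noise)
  show "sets gauss_noise = sets borel" by simp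
  show "integrable gauss_noise (\<lambda>x. x)"
    unfolding gauss_noise_def using integrable_std_normal_moment[of 1]
    by (subst integrable_density) auto
  show "(\<integral>x. x \<partial>gauss_noise) = 0"
    unfolding gauss_noise_def using integral_std_normal_moment_odd[of 0]
    by (subst integral_density) auto
  fix l :: real
  have mgf: "(\<lambda>x. std_normal_density x * exp (l * x)) = (\<lambda>x. exp (l\<^sup>2 / 2) * normal_density l 1 x)"
    by (rule ext) (metis exp_mult_std_normal_density mult.commute)
  show "integrable gauss_noise (\<lambda>x. exp (l * x))"
    unfolding gauss_noise_def by (subst integrable_density) (auto simp: mgf)
  show "(\<integral>x. exp (l * x) \<partial>gauss_noise) \<le> exp (l\<^sup>2 / 2)"
    unfolding gauss_noise_def by (subst integral_density) (auto simp: mgf)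
qed

lemma distr_gauss_noise_shift:
  "distr gauss_noise borel (\<lambda>x. \<mu> + x) = density lborel (normal_density \<mu> 1)"
proof (rule measure_eqI)
  fix A assume "A \<in> sets (distr gauss_noise borel (\<lambda>x. \<mu> + x))"
  then have A: "A \<in> sets borel" and A': "(+) \<mu> -` A \<in> sets borel"
    using measurable_sets_borel[of "(+) \<mu>" borel A] by auto
  have "emeasure (distr gauss_noise borel (\<lambda>x. \<mu> + x)) A
      = (\<integral>\<^sup>+x. ennreal (std_normal_density x) * indicator ((\<lambda>x. \<mu> + x) -` A) x \<partial>lborel)"
    using A A' by (simp add: emeasure_distr emeasure_density gauss_noise_def)
  also have "\<dots> = (\<integral>\<^sup>+x. ennreal (normal_density \<mu> 1 (\<mu> + 1 * x)) * indicator A (\<mu> + 1 * x) \<partial>lborel)"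
    by (intro nn_integral_cong) (auto simp: normal_density_def indicator_def)
  also have "\<dots> = (\<integral>\<^sup>+y. ennreal (normal_density \<mu> 1 y) * indicator A y \<partial>lborel)"
    using A by (subst nn_integral_real_affine[where c=1 and t=\<mu>]) auto
  also have "\<dots> = emeasure (density lborel (normal_density \<mu> 1)) A"
    using A by (simp add: emeasure_density)
  finally show "emeasure (distr gauss_noise borel (\<lambda>x. \<mu> + x)) A
      = emeasure (density lborel (normal_density \<mu> 1)) A" .
qed simp

lemma prob_space_distr_gauss_noise_shift: "prob_space (distr gauss_noise borel (\<lambda>x. \<mu> + x))"
  unfolding distr_gauss_noise_shift by (rule prob_space_normal_density) simp

definition gauss_lratio :: "real \<Rightarrow> real \<Rightarrow> real \<Rightarrow> real" where
  "gauss_lratio \<mu> \<Delta> y = exp (\<Delta> * (y - \<mu>) - \<Delta>\<^sup>2 / 2)"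

lemma distr_gauss_noise_shift_density:
  "distr gauss_noise borel (\<lambda>x. (\<mu> + \<Delta>) + x) =
     density (distr gauss_noise borel (\<lambda>x. \<mu> + x)) (gauss_lratio \<mu> \<Delta>)"
proof -
  have ratio: "normal_density \<mu> 1 y * gauss_lratio \<mu> \<Delta> y = normal_density (\<mu> + \<Delta>) 1 y" for y
  proof -
    have "-(y - \<mu>)\<^sup>2 / 2 + (\<Delta> * (y - \<mu>) - \<Delta>\<^sup>2 / 2) = -(y - (\<mu> + \<Delta>))\<^sup>2 / 2"
      by (simp add: power2_eq_square field_simps)
    then have "exp (-(y - \<mu>)\<^sup>2 / 2) * exp (\<Delta> * (y - \<mu>) - \<Delta>\<^sup>2 / 2) = exp (-(y - (\<mu> + \<Delta>))\<^sup>2 / 2)"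
      by (simp only: exp_add[symmetric])
    then show ?thesis
      unfolding normal_density_def gauss_lratio_def by simp
  qed
  show ?thesis
    unfolding distr_gauss_noise_shift
    by (subst density_density_eq)
       (auto simp: gauss_lratio_def ennreal_mult'[symmetric] ratio[unfolded gauss_lratio_def])
qed

lemma integral_distr_gauss_noise_shift:
  "integrable (distr gauss_noise borel (\<lambda>x. \<mu> + x)) (\<lambda>y. y) \<and>
   (\<integral>y. y \<partial>distr gauss_noise borel (\<lambda>x. \<mu> + x)) = \<mu>"
proof -
  interpret prob_space gauss_noise by (rule prob_space_gauss_noise)
  have "integrable gauss_noise (\<lambda>x. x)" and "(\<integral>x. x \<partial>gauss_noise) = 0"
    using gauss_noise_subgaussian by auto
  then have "integrable gauss_noise (\<lambda>x. \<mu> + x)" and "(\<integral>x. \<mu> + x \<partial>gauss_noise) = \<mu>"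
    by (auto simp: prob_space)
  then show ?thesis
    by (simp add: integrable_distr_eq integral_distr)
qed

section \<open>Reward measures and histories\<close>

lemma prob_space_reward_measure: "prob_space (reward_measure N Y gauss_noise A)"
  unfolding reward_measure_def
  by (rule prob_space_PiM) (rule prob_space_distr_gauss_noise_shift)

lemma sets_reward_measure:
  "sets (reward_measure N Y gauss_noise A) = sets (PiM {..<N} (\<lambda>_. (borel :: real measure)))"
  unfolding reward_measure_def by (rule sets_PiM_cong) auto

lemma integral_reward_measure_component:
  assumes "i < N"
  shows "integrable (reward_measure N Y gauss_noise A) (\<lambda>r. r i) \<and>
         (\<integral>r. r i \<partial>reward_measure N Y gauss_noise A) = Y i A"
proof -
  let ?M = "\<lambda>i. distr gauss_noise borel (\<lambda>x. Y i A + x)"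
  have marginal: "distr (PiM {..<N} ?M) (?M i) (\<lambda>\<omega>. \<omega> i) = ?M i"
    using assms by (intro distr_PiM_component prob_space_distr_gauss_noise_shift) auto
  have meas: "(\<lambda>\<omega>. \<omega> i) \<in> measurable (PiM {..<N} ?M) (?M i)"
    using assms by (auto intro!: measurable_component_singleton)
  have "integrable (PiM {..<N} ?M) (\<lambda>r. r i) = integrable (?M i) (\<lambda>y. y)"
    by (subst marginal[symmetric], rule integrable_distr_eq[OF meas, symmetric]) auto
  moreover have "(\<integral>r. r i \<partial>PiM {..<N} ?M) = (\<integral>y. y \<partial>?M i)"
    by (subst marginal[symmetric], rule integral_distr[OF meas, symmetric]) auto
  ultimately show ?thesis
    using integral_distr_gauss_noise_shift[of "Y i A"] unfolding reward_measure_def by simp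
qed

lemma integral_reward_measure_mean:
  "integrable (reward_measure N Y gauss_noise A) (\<lambda>r. (1 / real N) * (\<Sum>i<N. r i)) \<and>
   (\<integral>r. (1 / real N) * (\<Sum>i<N. r i) \<partial>reward_measure N Y gauss_noise A) = (1 / real N) * (\<Sum>i<N. Y i A)"
proof -
  have "integrable (reward_measure N Y gauss_noise A) (\<lambda>r. r i)"
    and "(\<integral>r. r i \<partial>reward_measure N Y gauss_noise A) = Y i A" if "i < N" for i
    using integral_reward_measure_component[OF that] by auto
  moreover from this have "integrable (reward_measure N Y gauss_noise A) (\<lambda>r. \<Sum>i<N. r i)"
    by (intro Bochner_Integration.integrable_sum) auto
  ultimately show ?thesis
    by (simp add: Bochner_Integration.integral_sum)
qed

lemma finite_superarms: "finite (superarms N K)"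
  unfolding superarms_def by (auto intro: finite_PiE)

lemma card_superarms: "card (superarms N K) = K ^ N"
  unfolding superarms_def by (simp add: card_PiE)

lemma admissible_policy_sum_pmf:
  assumes "admissible_policy N K \<pi>"
  shows "(\<Sum>A\<in>superarms N K. pmf (\<pi> t h) A) = 1"
  using assms finite_superarms by (intro sum_pmf_eq_1) (auto simp: admissible_policy_def)

lemma space_histM:
  "space (histM N K t) =
     PiE {..<t} (\<lambda>_. superarms N K \<times> space (PiM {..<N} (\<lambda>_. (borel :: real measure))))"
  unfolding histM_def by (simp add: space_PiM space_pair_measure)

lemma undefined_in_space_histM_0: "(\<lambda>_. undefined) \<in> space (histM N K 0)"
  unfolding space_histM by simp

lemma measurable_history_update:
  assumes A: "A \<in> superarms N K"
    and sets_R: "sets R = sets (PiM {..<N} (\<lambda>_. (borel :: real measure)))"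
  shows "(\<lambda>(h, r). h(t := (A, r))) \<in> measurable (histM N K t \<Otimes>\<^sub>M R) (histM N K (Suc t))"
proof -
  let ?C = "count_space (superarms N K) \<Otimes>\<^sub>M PiM {..<N} (\<lambda>_. (borel :: real measure))"
  let ?upd = "\<lambda>x. \<lambda>i\<in>{..<Suc t}. if i = t then (A, snd x) else fst x i"
  have upd_eq: "(\<lambda>(h, r). h(t := (A, r))) x = ?upd x" if "x \<in> space (histM N K t \<Otimes>\<^sub>M R)" for x
  proof -
    have "fst x \<in> extensional {..<t}"
      using that by (auto simp: space_pair_measure space_histM PiE_def)
    then show ?thesis
      by (cases x) (auto simp: fun_eq_iff extensional_def)
  qed
  have "?upd \<in> measurable (histM N K t \<Otimes>\<^sub>M R) (PiM {..<Suc t} (\<lambda>_. ?C))"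
  proof (rule measurable_restrict)
    fix i assume i: "i \<in> {..<Suc t}"
    show "(\<lambda>x. if i = t then (A, snd x) else fst x i) \<in> measurable (histM N K t \<Otimes>\<^sub>M R) ?C"
    proof (cases "i = t")
      case True
      have "snd \<in> measurable (histM N K t \<Otimes>\<^sub>M R) (PiM {..<N} (\<lambda>_. (borel :: real measure)))"
        using measurable_snd[of "histM N K t" R] unfolding measurable_cong_sets[OF refl sets_R] .
      then show ?thesis
        using True A by (auto intro!: measurable_Pair)
    next
      case False
      then have "i \<in> {..<t}" using i by auto
      then show ?thesis
        using False unfolding histM_def
        by (simp add: measurable_compose[OF measurable_fst measurable_component_singleton])
    qed
  qed
  then show ?thesis
    unfolding histM_def[of N K "Suc t"]
    by (rule measurable_cong[THEN iffD1, rotated]) (simp add: upd_eq histM_def)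
qed

lemma history_update_in_space:
  assumes "A \<in> superarms N K" "h \<in> space (histM N K t)" "r \<in> space (reward_measure N Y gauss_noise A')"
  shows "h(t := (A, r)) \<in> space (histM N K (Suc t))"
  using measurable_space[OF measurable_history_update[OF assms(1) sets_reward_measure], of "(h, r)"]
    assms(2,3)
  by (simp add: space_pair_measure)

lemma measurable_after_history_update:
  fixes g :: "history \<Rightarrow> real"
  assumes "g \<in> borel_measurable (histM N K (Suc t))" "A \<in> superarms N K"
  shows "(\<lambda>(h, r). g (h(t := (A, r)))) \<in> borel_measurable (histM N K t \<Otimes>\<^sub>M reward_measure N Y gauss_noise A')"
  using measurable_compose[OF measurable_history_update[OF assms(2) sets_reward_measure] assms(1)]
  by (simp add: case_prod_beta')

lemma measurable_after_history_update_reward: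
  fixes g :: "history \<Rightarrow> real"
  assumes g: "g \<in> borel_measurable (histM N K (Suc t))" and A: "A \<in> superarms N K"
    and h: "h \<in> space (histM N K t)"
  shows "(\<lambda>r. g (h(t := (A, r)))) \<in> borel_measurable (reward_measure N Y gauss_noise A')"
proof -
  have "(\<lambda>r. (h, r)) \<in> measurable (reward_measure N Y gauss_noise A')
                            (histM N K t \<Otimes>\<^sub>M reward_measure N Y gauss_noise A')"
    using h by (intro measurable_Pair) auto
  from measurable_compose[OF this measurable_after_history_update[OF g A]] show ?thesis
    by simp
qed

lemma measurable_integral_after_history_update:
  fixes g :: "history \<Rightarrow> real"
  assumes "g \<in> borel_measurable (histM N K (Suc t))" "A \<in> superarms N K"
  shows "(\<lambda>h. \<integral>r. g (h(t := (A, r))) \<partial>reward_measure N Y gauss_noise A') \<in> borel_measurable (histM N K t)"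
  using sigma_finite_measure.borel_measurable_lebesgue_integral
      [OF prob_space_imp_sigma_finite[OF prob_space_reward_measure]
          measurable_after_history_update[OF assms]]
  by simp

section \<open>Expected number of pulls of a super arm\<close>

primrec exp_pulls ::
  "nat \<Rightarrow> nat \<Rightarrow> (nat \<Rightarrow> (nat \<Rightarrow> nat) \<Rightarrow> real) \<Rightarrow> policy \<Rightarrow> (nat \<Rightarrow> nat) \<Rightarrow>
   nat \<Rightarrow> nat \<Rightarrow> history \<Rightarrow> real" where
  "exp_pulls N K Y \<pi> B 0 t h = 0"
| "exp_pulls N K Y \<pi> B (Suc k) t h =
     (\<Sum>A\<in>superarms N K. pmf (\<pi> t h) A *
        (of_bool (A = B) +
         (\<integral>r. exp_pulls N K Y \<pi> B k (Suc t) (h(t := (A, r))) \<partial>reward_measure N Y gauss_noise A)))"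

lemma exp_pulls_measurable_bounded:
  assumes pol: "admissible_policy N K \<pi>"
  shows "(\<lambda>h. exp_pulls N K Y \<pi> B k t h) \<in> borel_measurable (histM N K t) \<and>
         (\<forall>h\<in>space (histM N K t). 0 \<le> exp_pulls N K Y \<pi> B k t h \<and> exp_pulls N K Y \<pi> B k t h \<le> real k)"
proof (induction k arbitrary: t)
  case 0
  have "exp_pulls N K Y \<pi> B 0 t = (\<lambda>_. 0)"
    by (simp add: fun_eq_iff)
  then show ?case by simp
next
  case (Suc k)
  then have meas: "(\<lambda>h. exp_pulls N K Y \<pi> B k (Suc t) h) \<in> borel_measurable (histM N K (Suc t))"
    and bounded: "\<And>h. h \<in> space (histM N K (Suc t)) \<Longrightarrow>
                    0 \<le> exp_pulls N K Y \<pi> B k (Suc t) h \<and> exp_pulls N K Y \<pi> B k (Suc t) h \<le> real k"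
    by auto
  have "(\<lambda>h. exp_pulls N K Y \<pi> B (Suc k) t h) \<in> borel_measurable (histM N K t)"
    using measurable_integral_after_history_update[OF meas] pol
    by (auto simp: admissible_policy_def
        intro!: borel_measurable_sum borel_measurable_times borel_measurable_add)
  moreover have "0 \<le> exp_pulls N K Y \<pi> B (Suc k) t h \<and> exp_pulls N K Y \<pi> B (Suc k) t h \<le> real (Suc k)"
    if h: "h \<in> space (histM N K t)" for h
  proof -
    let ?I = "\<lambda>A. \<integral>r. exp_pulls N K Y \<pi> B k (Suc t) (h(t := (A, r))) \<partial>reward_measure N Y gauss_noise A"
    have "0 \<le> ?I A \<and> ?I A \<le> real k" if A: "A \<in> superarms N K" for A
      using prob_space.integrable_integral_between[OF prob_space_reward_measure
          measurable_after_history_update_reward[OF meas A h], where a=0 and b="real k"]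
        bounded history_update_in_space[OF A h]
      by auto
    then have "0 \<le> of_bool (A = B) + ?I A \<and> of_bool (A = B) + ?I A \<le> real (Suc k)"
      if "A \<in> superarms N K" for A
      using that by fastforce
    then show ?thesis
      unfolding exp_pulls.simps
      by (intro convex_combination_between finite_superarms admissible_policy_sum_pmf[OF pol]) auto
  qed
  ultimately show ?case by blast
qed

lemma exp_pulls_after_update_measurable_bounded:
  assumes pol: "admissible_policy N K \<pi>" and A: "A \<in> superarms N K" and h: "h \<in> space (histM N K t)"
  shows "(\<lambda>r. exp_pulls N K Y \<pi> B k (Suc t) (h(t := (A, r))))
           \<in> borel_measurable (reward_measure N Y' gauss_noise A')"
    and "r \<in> space (reward_measure N Y' gauss_noise A') \<Longrightarrow>
           0 \<le> exp_pulls N K Y \<pi> B k (Suc t) (h(t := (A, r))) \<and>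
           exp_pulls N K Y \<pi> B k (Suc t) (h(t := (A, r))) \<le> real k"
  using exp_pulls_measurable_bounded[OF pol, of Y B k "Suc t"] history_update_in_space[OF A h]
  by (auto intro: measurable_after_history_update_reward[OF _ A h])

lemma integral_exp_pulls_after_update:
  assumes "admissible_policy N K \<pi>" "A \<in> superarms N K" "h \<in> space (histM N K t)"
  shows "integrable (reward_measure N Y' gauss_noise A')
           (\<lambda>r. exp_pulls N K Y \<pi> B k (Suc t) (h(t := (A, r)))) \<and>
    0 \<le> (\<integral>r. exp_pulls N K Y \<pi> B k (Suc t) (h(t := (A, r))) \<partial>reward_measure N Y' gauss_noise A') \<and>
    (\<integral>r. exp_pulls N K Y \<pi> B k (Suc t) (h(t := (A, r))) \<partial>reward_measure N Y' gauss_noise A') \<le> real k"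
  using exp_pulls_after_update_measurable_bounded[OF assms]
  by (intro prob_space.integrable_integral_between[OF prob_space_reward_measure]) auto

lemma sum_exp_pulls:
  assumes pol: "admissible_policy N K \<pi>"
  shows "h \<in> space (histM N K t) \<Longrightarrow> (\<Sum>B\<in>superarms N K. exp_pulls N K Y \<pi> B k t h) = real k"
proof (induction k arbitrary: t h)
  case (Suc k)
  let ?R = "reward_measure N Y gauss_noise"
  have later: "(\<Sum>B\<in>superarms N K. (\<integral>r. exp_pulls N K Y \<pi> B k (Suc t) (h(t := (A, r))) \<partial>?R A)) = real k"
    if A: "A \<in> superarms N K" for A
  proof -
    interpret prob_space "?R A" by (rule prob_space_reward_measure)
    have "(\<Sum>B\<in>superarms N K. (\<integral>r. exp_pulls N K Y \<pi> B k (Suc t) (h(t := (A, r))) \<partial>?R A))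
        = (\<integral>r. (\<Sum>B\<in>superarms N K. exp_pulls N K Y \<pi> B k (Suc t) (h(t := (A, r)))) \<partial>?R A)"
      using integral_exp_pulls_after_update[OF pol A Suc.prems]
      by (intro Bochner_Integration.integral_sum[symmetric]) auto
    also have "\<dots> = (\<integral>r. real k \<partial>?R A)"
      by (intro Bochner_Integration.integral_cong refl Suc.IH history_update_in_space[OF A Suc.prems])
    finally show ?thesis by (simp add: prob_space)
  qed
  have "(\<Sum>B\<in>superarms N K. exp_pulls N K Y \<pi> B (Suc k) t h)
     = (\<Sum>A\<in>superarms N K. pmf (\<pi> t h) A * ((\<Sum>B\<in>superarms N K. of_bool (A = B)) +
          (\<Sum>B\<in>superarms N K. (\<integral>r. exp_pulls N K Y \<pi> B k (Suc t) (h(t := (A, r))) \<partial>?R A))))"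
    unfolding exp_pulls.simps by (subst sum.swap) (simp only: sum_distrib_left[symmetric] sum.distrib)
  also have "\<dots> = (\<Sum>A\<in>superarms N K. pmf (\<pi> t h) A * (1 + real k))"
    using later finite_superarms by (intro sum.cong refl) (simp add: sum.delta)
  also have "\<dots> = real (Suc k)"
    using admissible_policy_sum_pmf[OF pol] by (simp add: sum_distrib_right[symmetric])
  finally show ?case .
qed simp

section \<open>Bump instances\<close>

definition bump_instance :: "real \<Rightarrow> (nat \<Rightarrow> nat) \<Rightarrow> nat \<Rightarrow> (nat \<Rightarrow> nat) \<Rightarrow> real" where
  "bump_instance \<Delta> B = (\<lambda>i A. 1/2 + (if A = B then \<Delta> else 0))"

lemma bump_instance_zero: "bump_instance 0 B = (\<lambda>i A. 1/2)"
  by (simp add: bump_instance_def fun_eq_iff)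

lemma admissible_bump_instance:
  assumes "0 \<le> \<Delta>" "\<Delta> \<le> 1/2"
  shows "admissible_instance N K (bump_instance \<Delta> B) gauss_noise"
  unfolding admissible_instance_def using gauss_noise_subgaussian assms by (auto simp: bump_instance_def)

lemma mean_bump_instance:
  assumes "N \<ge> 1"
  shows "(1 / real N) * (\<Sum>i<N. bump_instance \<Delta> B i A) = 1/2 + (if A = B then \<Delta> else 0)"
  using assms by (simp add: bump_instance_def)

lemma Max_mean_bump_instance:
  assumes "N \<ge> 1" "B \<in> superarms N K" "0 \<le> \<Delta>"
  shows "Max ((\<lambda>A. (1 / real N) * (\<Sum>i<N. bump_instance \<Delta> B i A)) ` superarms N K) = 1/2 + \<Delta>"
  unfolding mean_bump_instance[OF assms(1)]
  using assms(2,3) finite_superarms by (intro Max_eqI) force+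

lemma exp_reward_bump_instance:
  assumes pol: "admissible_policy N K \<pi>" and N: "N \<ge> 1"
  shows "h \<in> space (histM N K t) \<Longrightarrow>
    exp_reward N K (bump_instance \<Delta> B) gauss_noise \<pi> k t h =
      real k / 2 + \<Delta> * exp_pulls N K (bump_instance \<Delta> B) \<pi> B k t h"
proof (induction k arbitrary: t h)
  case (Suc k)
  let ?R = "reward_measure N (bump_instance \<Delta> B) gauss_noise"
  let ?n = "\<lambda>A r. exp_pulls N K (bump_instance \<Delta> B) \<pi> B k (Suc t) (h(t := (A, r)))"
  have round: "(\<integral>r. (1 / real N) * (\<Sum>i<N. r i) +
                  exp_reward N K (bump_instance \<Delta> B) gauss_noise \<pi> k (Suc t) (h(t := (A, r))) \<partial>?R A)
      = 1/2 + real k / 2 + \<Delta> * (of_bool (A = B) + (\<integral>r. ?n A r \<partial>?R A))"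
    if A: "A \<in> superarms N K" for A
  proof -
    interpret prob_space "?R A" by (rule prob_space_reward_measure)
    have "(\<integral>r. (1 / real N) * (\<Sum>i<N. r i) +
                exp_reward N K (bump_instance \<Delta> B) gauss_noise \<pi> k (Suc t) (h(t := (A, r))) \<partial>?R A)
        = (\<integral>r. (1 / real N) * (\<Sum>i<N. r i) + (real k / 2 + \<Delta> * ?n A r) \<partial>?R A)"
      by (intro Bochner_Integration.integral_cong refl arg_cong2[where f="(+)"] Suc.IH
          history_update_in_space[OF A Suc.prems])
    also have "\<dots> = (1 / real N) * (\<Sum>i<N. bump_instance \<Delta> B i A) + (real k / 2 + \<Delta> * (\<integral>r. ?n A r \<partial>?R A))"
      using integral_reward_measure_mean[of N "bump_instance \<Delta> B" A]
        integral_exp_pulls_after_update[OF pol A Suc.prems]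
      by (simp add: prob_space)
    finally show ?thesis
      unfolding mean_bump_instance[OF N] by (simp add: algebra_simps)
  qed
  have "exp_reward N K (bump_instance \<Delta> B) gauss_noise \<pi> (Suc k) t h
      = (\<Sum>A\<in>superarms N K. pmf (\<pi> t h) A * ((1 + real k) / 2) +
           \<Delta> * (pmf (\<pi> t h) A * (of_bool (A = B) + (\<integral>r. ?n A r \<partial>?R A))))"
    unfolding exp_reward.simps by (intro sum.cong refl) (simp only: round, simp add: algebra_simps)
  also have "\<dots> = (\<Sum>A\<in>superarms N K. pmf (\<pi> t h) A) * ((1 + real k) / 2) +
      \<Delta> * exp_pulls N K (bump_instance \<Delta> B) \<pi> B (Suc k) t h"
    by (simp only: exp_pulls.simps sum.distrib sum_distrib_right sum_distrib_left)
  finally show ?case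
    using admissible_policy_sum_pmf[OF pol] by simp
qed simp

lemma naive_regret_bump_instance:
  assumes "admissible_policy N K \<pi>" "N \<ge> 1" "B \<in> superarms N K" "0 \<le> \<Delta>"
  shows "naive_regret N K (bump_instance \<Delta> B) gauss_noise \<pi> T =
           \<Delta> * (real T - exp_pulls N K (bump_instance \<Delta> B) \<pi> B T 0 (\<lambda>_. undefined))"
  unfolding naive_regret_def Max_mean_bump_instance[OF assms(2-4)]
    exp_reward_bump_instance[OF assms(1,2) undefined_in_space_histM_0]
  by (simp add: algebra_simps)

definition bump_lratio :: "nat \<Rightarrow> real \<Rightarrow> (nat \<Rightarrow> nat) \<Rightarrow> (nat \<Rightarrow> nat) \<Rightarrow> (nat \<Rightarrow> real) \<Rightarrow> real" where
  "bump_lratio N \<Delta> B A r = (if A = B then exp (\<Sum>i<N. \<Delta> * (r i - 1/2) - \<Delta>\<^sup>2 / 2) else 1)"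

lemma bump_lratio_pos: "0 < bump_lratio N \<Delta> B A r"
  by (simp add: bump_lratio_def)

lemma borel_measurable_bump_lratio:
  "bump_lratio N \<Delta> B A \<in> borel_measurable (reward_measure N Y gauss_noise A')"
  unfolding measurable_cong_sets[OF sets_reward_measure refl] bump_lratio_def by measurable

lemma reward_measure_bump_density:
  "reward_measure N (bump_instance \<Delta> B) gauss_noise A =
     density (reward_measure N (bump_instance 0 B) gauss_noise A) (bump_lratio N \<Delta> B A)"
proof (cases "A = B")
  case True
  let ?M = "\<lambda>i::nat. distr gauss_noise borel (\<lambda>x. 1/2 + x)"
  have "reward_measure N (bump_instance \<Delta> B) gauss_noise A =
          PiM {..<N} (\<lambda>i. density (?M i) (gauss_lratio (1/2) \<Delta>))"
    unfolding reward_measure_def bump_instance_def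
    using True distr_gauss_noise_shift_density[of "1/2" \<Delta>] by simp
  also have "\<dots> = density (PiM {..<N} ?M) (\<lambda>r. ennreal (\<Prod>i\<in>{..<N}. gauss_lratio (1/2) \<Delta> (r i)))"
    using prob_space_distr_gauss_noise_shift[of "1/2 + \<Delta>"] distr_gauss_noise_shift_density[of "1/2" \<Delta>]
    by (intro PiM_density prob_space_distr_gauss_noise_shift) (auto simp: gauss_lratio_def)
  also have "(\<lambda>r. \<Prod>i\<in>{..<N}. gauss_lratio (1/2) \<Delta> (r i)) = bump_lratio N \<Delta> B A"
    using True by (simp add: fun_eq_iff bump_lratio_def gauss_lratio_def exp_sum)
  finally show ?thesis
    unfolding reward_measure_def bump_instance_def by simp
next
  case False
  then show ?thesis
    by (simp add: reward_measure_def bump_instance_def bump_lratio_def density_1)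
qed

lemma integrable_integral_bump_lratio:
  "integrable (reward_measure N (bump_instance 0 B) gauss_noise A) (bump_lratio N \<Delta> B A) \<and>
   (\<integral>r. bump_lratio N \<Delta> B A r \<partial>reward_measure N (bump_instance 0 B) gauss_noise A) = 1"
  using prob_space_reward_measure[of N "bump_instance \<Delta> B" A] bump_lratio_pos
  by (intro integrable_integral_density_prob_space borel_measurable_bump_lratio)
     (simp_all add: reward_measure_bump_density[of N \<Delta>] less_imp_le)

lemma integrable_integral_ln_bump_lratio:
  "integrable (reward_measure N (bump_instance 0 B) gauss_noise A) (\<lambda>r. ln (bump_lratio N \<Delta> B A r)) \<and>
   (\<integral>r. ln (bump_lratio N \<Delta> B A r) \<partial>reward_measure N (bump_instance 0 B) gauss_noise A) =
     - (if A = B then real N * \<Delta>\<^sup>2 / 2 else 0)"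
proof -
  let ?R = "reward_measure N (bump_instance 0 B) gauss_noise A"
  interpret prob_space ?R by (rule prob_space_reward_measure)
  have comp: "integrable ?R (\<lambda>r. r i)" "(\<integral>r. r i \<partial>?R) = 1/2" if "i < N" for i
    using integral_reward_measure_component[OF that, of "bump_instance 0 B" A]
    by (auto simp: bump_instance_zero)
  have ln_eq: "ln (bump_lratio N \<Delta> B A r) = (if A = B then (\<Sum>i<N. \<Delta> * (r i - 1/2) - \<Delta>\<^sup>2 / 2) else 0)" for r
    by (simp add: bump_lratio_def)
  have "integrable ?R (\<lambda>r. \<Sum>i<N. \<Delta> * (r i - 1/2) - \<Delta>\<^sup>2 / 2)"
    using comp by (intro Bochner_Integration.integrable_sum) auto
  moreover have "(\<integral>r. (\<Sum>i<N. \<Delta> * (r i - 1/2) - \<Delta>\<^sup>2 / 2) \<partial>?R) =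
                   (\<Sum>i<N. \<integral>r. \<Delta> * (r i - 1/2) - \<Delta>\<^sup>2 / 2 \<partial>?R)"
    using comp by (intro Bochner_Integration.integral_sum) auto
  moreover have "\<dots> = (\<Sum>i<N. - (\<Delta>\<^sup>2 / 2))"
    using comp by (intro sum.cong refl) (simp add: prob_space)
  ultimately show ?thesis
    unfolding ln_eq by (cases "A = B") auto
qed

lemma integral_reward_measure_bump:
  assumes "g \<in> borel_measurable (PiM {..<N} (\<lambda>_. (borel :: real measure)))"
  shows "(\<integral>r. g r \<partial>reward_measure N (bump_instance \<Delta> B) gauss_noise A) =
         (\<integral>r. bump_lratio N \<Delta> B A r * g r \<partial>reward_measure N (bump_instance 0 B) gauss_noise A)"
  unfolding reward_measure_bump_density[of N \<Delta>]
  using assms borel_measurable_bump_lratio bump_lratio_pos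
  by (subst integral_density) (auto simp: measurable_cong_sets[OF sets_reward_measure refl] less_imp_le)

section \<open>Bernoulli Kullback-Leibler divergence\<close>

definition bkl :: "real \<Rightarrow> real \<Rightarrow> real" where
  "bkl p q = p * ln (p / q) + (1 - p) * ln ((1 - p) / (1 - q))"

lemma bkl_self: "bkl p p = 0"
  unfolding bkl_def by (cases "p = 0"; cases "p = 1") auto

lemma one_minus_inverse_le_ln:
  fixes x :: real
  assumes "0 < x"
  shows "1 - 1 / x \<le> ln x"
  using ln_le_minus_one[of "1 / x"] assms by (simp add: ln_div)

lemma mult_ln_div_ge:
  fixes p q \<alpha> \<beta> :: real
  assumes "0 < p" "0 < q" "0 < \<alpha>" "0 < \<beta>"
  shows "p * ln (\<beta> / \<alpha>) + p - q * (\<beta> / \<alpha>) \<le> p * ln (p / q)"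
proof -
  have "p * (1 - 1 / ((p * \<alpha>) / (q * \<beta>))) \<le> p * ln ((p * \<alpha>) / (q * \<beta>))"
    using assms by (intro mult_left_mono one_minus_inverse_le_ln) auto
  moreover have "p * (1 - 1 / ((p * \<alpha>) / (q * \<beta>))) = p - q * (\<beta> / \<alpha>)"
    using assms by (simp add: field_simps)
  moreover have "ln ((p * \<alpha>) / (q * \<beta>)) = ln (p / q) - ln (\<beta> / \<alpha>)"
    using assms by (simp add: ln_div ln_mult)
  ultimately show ?thesis
    by (simp add: right_diff_distrib)
qed

(* With y = l v, the right-hand side is u ln (u / y) + (1 - u) ln ((1 - u) / (l - y)), a jointly
   convex function of (u, y, l); the left-hand side is its tangent plane at (b, a, 1). *)
lemma bkl_tangent_le:
  fixes a b u v l :: real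
  assumes a: "0 < a" "a < 1" and b: "0 < b" "b < 1" and u: "0 < u" "u < 1" and v: "0 < v" "v < 1"
    and l: "0 < l"
  shows "bkl b a + (ln (b / a) - ln ((1 - b) / (1 - a))) * (u - b)
           + ((1 - b) / (1 - a) - b / a) * (l * v - a) - (1 - b) / (1 - a) * (l - 1)
         \<le> bkl u v - ln l"
proof -
  define X Y c d where "X = ln (b / a)" and "Y = ln ((1 - b) / (1 - a))"
    and "c = (1 - b) / (1 - a)" and "d = b / a"
  have "d * a = b" "c * (1 - a) = 1 - b"
    using a unfolding c_def d_def by simp_all
  then have lhs: "bkl b a + (X - Y) * (u - b) + (c - d) * (l * v - a) - c * (l - 1)
      = u * X + (1 - u) * Y + 1 - (l * v) * d - (l * (1 - v)) * c"
    unfolding bkl_def X_def [symmetric] Y_def [symmetric] by (simp add: algebra_simps)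
  have "u * X + u - (l * v) * d \<le> u * ln (u / (l * v))"
    unfolding X_def d_def using a b u v l by (intro mult_ln_div_ge) auto
  moreover have "(1 - u) * Y + (1 - u) - (l * (1 - v)) * c \<le> (1 - u) * ln ((1 - u) / (l * (1 - v)))"
    unfolding Y_def c_def using a b u v l by (intro mult_ln_div_ge) auto
  moreover have "u * ln (u / (l * v)) + (1 - u) * ln ((1 - u) / (l * (1 - v))) = bkl u v - ln l"
  proof -
    have "ln (u / (l * v)) = ln (u / v) - ln l" "ln ((1 - u) / (l * (1 - v))) = ln ((1 - u) / (1 - v)) - ln l"
      using u v l by (simp_all add: ln_div ln_mult)
    then show ?thesis
      unfolding bkl_def by (simp only:) (simp add: algebra_simps)
  qed
  ultimately show ?thesis
    using lhs unfolding X_def Y_def c_def d_def by linarith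
qed

lemma twice_sub_sqrt_le_mult_ln_div:
  fixes p q :: real
  assumes "0 < p" "0 < q"
  shows "2 * (p - sqrt (p * q)) \<le> p * ln (p / q)"
proof -
  have "p * ln (sqrt p / sqrt q) + p - q * (sqrt p / sqrt q) \<le> p * ln (p / q)"
    using assms by (intro mult_ln_div_ge) auto
  moreover have "ln (sqrt p / sqrt q) = ln (p / q) / 2"
    using assms by (simp add: ln_sqrt real_sqrt_divide[symmetric])
  moreover have "q * (sqrt p / sqrt q) = sqrt (p * q)"
    using assms by (simp add: real_sqrt_mult field_simps)
  ultimately show ?thesis
    by (simp add: algebra_simps)
qed

(* A weak form of Pinsker's inequality, through the squared Hellinger distance. *)
lemma sq_diff_le_bkl:
  fixes p q :: real
  assumes p: "0 < p" "p < 1" and q: "0 < q" "q < 1"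
  shows "(p - q)\<^sup>2 / 4 \<le> bkl p q"
proof -
  have "2 * (p - sqrt (p * q)) + 2 * ((1 - p) - sqrt ((1 - p) * (1 - q))) \<le> bkl p q"
    using twice_sub_sqrt_le_mult_ln_div[of p q] twice_sub_sqrt_le_mult_ln_div[of "1 - p" "1 - q"] p q
    unfolding bkl_def by simp
  moreover have "2 * (p - sqrt (p * q)) + 2 * ((1 - p) - sqrt ((1 - p) * (1 - q)))
      = (sqrt p - sqrt q)\<^sup>2 + (sqrt (1 - p) - sqrt (1 - q))\<^sup>2"
  proof -
    have "(sqrt p - sqrt q)\<^sup>2 = p + q - 2 * sqrt (p * q)"
      "(sqrt (1 - p) - sqrt (1 - q))\<^sup>2 = (1 - p) + (1 - q) - 2 * sqrt ((1 - p) * (1 - q))"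
      using p q by (simp_all add: power2_diff real_sqrt_mult)
    then show ?thesis by simp
  qed
  moreover have "(p - q)\<^sup>2 \<le> (sqrt p - sqrt q)\<^sup>2 * 4"
  proof -
    have "p - q = (sqrt p - sqrt q) * (sqrt p + sqrt q)"
      using p q by (simp add: algebra_simps)
    then have "(p - q)\<^sup>2 = (sqrt p - sqrt q)\<^sup>2 * (sqrt p + sqrt q)\<^sup>2"
      by (simp add: power_mult_distrib)
    moreover have "(sqrt p + sqrt q)\<^sup>2 \<le> 2\<^sup>2"
    proof (rule power_mono)
      have "sqrt p \<le> 1" "sqrt q \<le> 1"
        using p q by auto
      then show "sqrt p + sqrt q \<le> 2" by linarith
    qed (use p q in auto)
    ultimately show ?thesis
      by (simp add: mult_left_mono)
  qed
  ultimately show ?thesis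
    using zero_le_power2[of "sqrt (1 - p) - sqrt (1 - q)"] by linarith
qed

lemma abs_bkl_le:
  assumes "1/3 \<le> u" "u \<le> 2/3" "1/3 \<le> v" "v \<le> 2/3"
  shows "\<bar>bkl u v\<bar> \<le> 2"
proof -
  have abs_ln: "\<bar>ln x\<bar> \<le> 1" if "1/2 \<le> x" "x \<le> 2" for x :: real
  proof -
    have "1 / x \<le> 2"
      using that by (simp add: field_simps)
    then show ?thesis
      using that ln_le_minus_one[of x] one_minus_inverse_le_ln[of x] by auto
  qed
  have "\<bar>ln (u / v)\<bar> \<le> 1" "\<bar>ln ((1 - u) / (1 - v))\<bar> \<le> 1"
    using assms by (intro abs_ln; simp add: field_simps)+
  then have "\<bar>u * ln (u / v)\<bar> \<le> 1" "\<bar>(1 - u) * ln ((1 - u) / (1 - v))\<bar> \<le> 1"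
    using assms by (auto simp: abs_mult intro!: mult_le_one)
  then show ?thesis
    unfolding bkl_def by linarith
qed

lemma integrable_bkl:
  assumes "prob_space M" "u \<in> borel_measurable M" "v \<in> borel_measurable M"
    and "\<And>x. x \<in> space M \<Longrightarrow> 1/3 \<le> u x \<and> u x \<le> 2/3 \<and> 1/3 \<le> v x \<and> v x \<le> 2/3"
  shows "integrable M (\<lambda>x. bkl (u x) (v x))"
proof -
  interpret prob_space M by fact
  note assms(2,3)[measurable]
  have "(\<lambda>x. bkl (u x) (v x)) \<in> borel_measurable M"
    unfolding bkl_def by measurable
  then show ?thesis
    using assms(4) abs_bkl_le by (intro integrable_const_bound[where B=2]) (auto intro!: AE_I2)
qed

(* A data-processing inequality, obtained by averaging bkl_tangent_le over the mixture;
   the term -\<integral> ln (l A) is the divergence of Q A from its tilt by l A. *)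
lemma bkl_mixture_le:
  fixes S :: "'a set" and w :: "'a \<Rightarrow> real" and Q :: "'a \<Rightarrow> 'b measure"
    and u v l :: "'a \<Rightarrow> 'b \<Rightarrow> real"
  assumes S: "finite S" and w: "\<And>A. A \<in> S \<Longrightarrow> 0 \<le> w A" "sum w S = 1"
    and Q: "\<And>A. A \<in> S \<Longrightarrow> prob_space (Q A)"
    and u: "\<And>A. A \<in> S \<Longrightarrow> u A \<in> borel_measurable (Q A)"
    and v: "\<And>A. A \<in> S \<Longrightarrow> v A \<in> borel_measurable (Q A)"
    and uv: "\<And>A x. A \<in> S \<Longrightarrow> x \<in> space (Q A) \<Longrightarrow>
               1/3 \<le> u A x \<and> u A x \<le> 2/3 \<and> 1/3 \<le> v A x \<and> v A x \<le> 2/3"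
    and l: "\<And>A. A \<in> S \<Longrightarrow> integrable (Q A) (l A)" "\<And>A. A \<in> S \<Longrightarrow> (\<integral>x. l A x \<partial>Q A) = 1"
      "\<And>A x. A \<in> S \<Longrightarrow> x \<in> space (Q A) \<Longrightarrow> 0 < l A x"
      "\<And>A. A \<in> S \<Longrightarrow> integrable (Q A) (\<lambda>x. ln (l A x))"
  shows "bkl (\<Sum>A\<in>S. w A * (\<integral>x. u A x \<partial>Q A)) (\<Sum>A\<in>S. w A * (\<integral>x. l A x * v A x \<partial>Q A))
         \<le> (\<Sum>A\<in>S. w A * (\<integral>x. bkl (u A x) (v A x) - ln (l A x) \<partial>Q A))"
proof -
  define b where "b = (\<Sum>A\<in>S. w A * (\<integral>x. u A x \<partial>Q A))"
  define a where "a = (\<Sum>A\<in>S. w A * (\<integral>x. l A x * v A x \<partial>Q A))"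
  define c1 c3 c4 where "c1 = ln (b / a) - ln ((1 - b) / (1 - a))"
    and "c3 = (1 - b) / (1 - a) - b / a" and "c4 = (1 - b) / (1 - a)"
  define tangent where "tangent x y z = bkl b a + c1 * (x - b) + c3 * (y - a) - c4 * (z - 1)" for x y z
  have int_u: "integrable (Q A) (u A)" and bounds_u: "1/3 \<le> (\<integral>x. u A x \<partial>Q A) \<and> (\<integral>x. u A x \<partial>Q A) \<le> 2/3"
    if A: "A \<in> S" for A
    using prob_space.integrable_integral_between[OF Q[OF A] u[OF A], where a="1/3" and b="2/3"] uv[OF A]
    by auto
  have int_lv: "integrable (Q A) (\<lambda>x. l A x * v A x)"
    and bounds_lv: "1/3 \<le> (\<integral>x. l A x * v A x \<partial>Q A) \<and> (\<integral>x. l A x * v A x \<partial>Q A) \<le> 2/3"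
    if A: "A \<in> S" for A
    using integrable_integral_weighted_between[OF l(1,2)[OF A] _ v[OF A], of "1/3" "2/3"] l(3)[OF A] uv[OF A]
    by (auto simp: less_imp_le)
  have "1/3 \<le> b \<and> b \<le> 2/3" "1/3 \<le> a \<and> a \<le> 2/3"
    unfolding a_def b_def using bounds_u bounds_lv by (intro convex_combination_between S w; simp)+
  then have tangent_le: "tangent (u A x) (l A x * v A x) (l A x) \<le> bkl (u A x) (v A x) - ln (l A x)"
    if "A \<in> S" "x \<in> space (Q A)" for A x
    unfolding tangent_def c1_def c3_def c4_def
    using uv[OF that] l(3)[OF that] by (intro bkl_tangent_le) auto
  have integral_tangent: "(\<integral>x. tangent (u A x) (l A x * v A x) (l A x) \<partial>Q A)
      = tangent (\<integral>x. u A x \<partial>Q A) (\<integral>x. l A x * v A x \<partial>Q A) 1" if A: "A \<in> S" for A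
  proof -
    interpret prob_space "Q A" by (rule Q[OF A])
    show ?thesis
      unfolding tangent_def using int_u[OF A] int_lv[OF A] l(1,2)[OF A] by (simp add: prob_space)
  qed
  have "(\<Sum>A\<in>S. w A * tangent (\<integral>x. u A x \<partial>Q A) (\<integral>x. l A x * v A x \<partial>Q A) 1)
      = bkl b a * sum w S + c1 * ((\<Sum>A\<in>S. w A * (\<integral>x. u A x \<partial>Q A)) - b * sum w S)
          + c3 * ((\<Sum>A\<in>S. w A * (\<integral>x. l A x * v A x \<partial>Q A)) - a * sum w S)"
    unfolding tangent_def
    by (simp add: algebra_simps sum.distrib sum_subtractf sum_distrib_left sum_distrib_right)
  also have "\<dots> = bkl b a"
    using w(2) unfolding a_def b_def by simp
  finally have "bkl b a = (\<Sum>A\<in>S. w A * (\<integral>x. tangent (u A x) (l A x * v A x) (l A x) \<partial>Q A))"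
    by (simp add: integral_tangent)
  also have "\<dots> \<le> (\<Sum>A\<in>S. w A * (\<integral>x. bkl (u A x) (v A x) - ln (l A x) \<partial>Q A))"
  proof (intro sum_mono mult_left_mono w(1) integral_mono tangent_le)
    fix A assume A: "A \<in> S"
    interpret prob_space "Q A" by (rule Q[OF A])
    show "integrable (Q A) (\<lambda>x. tangent (u A x) (l A x * v A x) (l A x))"
      unfolding tangent_def using int_u[OF A] int_lv[OF A] l(1)[OF A] by simp
    show "integrable (Q A) (\<lambda>x. bkl (u A x) (v A x) - ln (l A x))"
      using integrable_bkl[OF Q[OF A] u[OF A] v[OF A]] uv[OF A] l(4)[OF A] by simp
  qed
  finally show ?thesis
    unfolding a_def b_def .
qed

section \<open>The information bound\<close>

(* Rescaled counts lie in [1/3, 2/3], away from the singularities of bkl. *)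
definition count_scale :: "nat \<Rightarrow> real \<Rightarrow> real" where
  "count_scale T x = 1/3 + x / (3 * real T)"

lemma count_scale_between:
  "0 < T \<Longrightarrow> 0 \<le> x \<Longrightarrow> x \<le> real T \<Longrightarrow> 1/3 \<le> count_scale T x \<and> count_scale T x \<le> 2/3"
  unfolding count_scale_def by (auto simp: field_simps)

lemma integral_count_scale:
  assumes "prob_space M" "integrable M f"
  shows "(\<integral>x. count_scale T (c + f x) \<partial>M) = count_scale T (c + (\<integral>x. f x \<partial>M))"
proof -
  interpret prob_space M by fact
  show ?thesis
    using assms(2) by (simp add: count_scale_def add_divide_distrib prob_space)
qed

lemma sum_count_scale:
  assumes "sum w S = 1"
  shows "(\<Sum>A\<in>S. w A * count_scale T (c + x A)) = count_scale T (c + (\<Sum>A\<in>S. w A * x A))"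
proof -
  have "(\<Sum>A\<in>S. w A * count_scale T (c + x A))
      = (\<Sum>A\<in>S. w A) * (1/3 + c / (3 * real T)) + (\<Sum>A\<in>S. w A * x A) / (3 * real T)"
    unfolding count_scale_def
    by (simp add: add_divide_distrib algebra_simps sum.distrib sum_distrib_left sum_distrib_right
        sum_divide_distrib)
  then show ?thesis
    using assms unfolding count_scale_def by (simp add: add_divide_distrib)
qed

lemma count_scale_exp_pulls_Suc:
  assumes pol: "admissible_policy N K \<pi>" and h: "h \<in> space (histM N K t)"
  shows "count_scale T (c + exp_pulls N K Y \<pi> B (Suc k) t h) =
    (\<Sum>A\<in>superarms N K. pmf (\<pi> t h) A *
       (\<integral>r. count_scale T (c + of_bool (A = B) + exp_pulls N K Y \<pi> B k (Suc t) (h(t := (A, r))))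
         \<partial>reward_measure N Y gauss_noise A))"
proof -
  have "(\<integral>r. count_scale T ((c + of_bool (A = B)) + exp_pulls N K Y \<pi> B k (Suc t) (h(t := (A, r))))
          \<partial>reward_measure N Y gauss_noise A)
      = count_scale T (c + (of_bool (A = B) +
          (\<integral>r. exp_pulls N K Y \<pi> B k (Suc t) (h(t := (A, r))) \<partial>reward_measure N Y gauss_noise A)))"
    if A: "A \<in> superarms N K" for A
    using integral_exp_pulls_after_update[OF pol A h]
    by (subst integral_count_scale[OF prob_space_reward_measure]) (simp_all add: add.assoc)
  then show ?thesis
    unfolding exp_pulls.simps
    by (simp add: sum_count_scale[OF admissible_policy_sum_pmf[OF pol]] add.assoc cong: sum.cong)
qed

lemma count_scale_exp_pulls_bump_Suc:
  assumes pol: "admissible_policy N K \<pi>" and h: "h \<in> space (histM N K t)"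
  shows "count_scale T (c + exp_pulls N K (bump_instance \<Delta> B) \<pi> B (Suc k) t h) =
    (\<Sum>A\<in>superarms N K. pmf (\<pi> t h) A *
       (\<integral>r. bump_lratio N \<Delta> B A r *
             count_scale T (c + of_bool (A = B) +
               exp_pulls N K (bump_instance \<Delta> B) \<pi> B k (Suc t) (h(t := (A, r))))
         \<partial>reward_measure N (bump_instance 0 B) gauss_noise A))"
proof -
  have "(\<lambda>r. count_scale T (c + of_bool (A = B) +
                exp_pulls N K (bump_instance \<Delta> B) \<pi> B k (Suc t) (h(t := (A, r)))))
          \<in> borel_measurable (PiM {..<N} (\<lambda>_. borel))"
    if A: "A \<in> superarms N K" for A
    using exp_pulls_after_update_measurable_bounded(1)[OF pol A h, where A'=A and Y'="bump_instance \<Delta> B"]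
    unfolding count_scale_def measurable_cong_sets[OF sets_reward_measure refl] by simp
  then show ?thesis
    unfolding count_scale_exp_pulls_Suc[OF pol h]
    by (simp add: integral_reward_measure_bump cong: sum.cong)
qed

lemma integral_bkl_sub_ln_bump_lratio_le:
  fixes N :: nat and B A :: "nat \<Rightarrow> nat" and u v m :: "(nat \<Rightarrow> real) \<Rightarrow> real"
  defines "Q \<equiv> reward_measure N (bump_instance 0 B) gauss_noise A"
  assumes uv: "u \<in> borel_measurable Q" "v \<in> borel_measurable Q"
      "\<And>r. r \<in> space Q \<Longrightarrow> 1/3 \<le> u r \<and> u r \<le> 2/3 \<and> 1/3 \<le> v r \<and> v r \<le> 2/3"
    and m: "integrable Q m" "\<And>r. r \<in> space Q \<Longrightarrow> bkl (u r) (v r) \<le> real N * \<Delta>\<^sup>2 / 2 * m r"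
  shows "(\<integral>r. bkl (u r) (v r) - ln (bump_lratio N \<Delta> B A r) \<partial>Q)
           \<le> real N * \<Delta>\<^sup>2 / 2 * (of_bool (A = B) + (\<integral>r. m r \<partial>Q))"
proof -
  have Q: "prob_space Q"
    unfolding Q_def by (rule prob_space_reward_measure)
  have "(\<integral>r. bkl (u r) (v r) \<partial>Q) \<le> (\<integral>r. real N * \<Delta>\<^sup>2 / 2 * m r \<partial>Q)"
    using integrable_bkl[OF Q uv] m by (intro integral_mono) auto
  moreover have "(\<integral>r. bkl (u r) (v r) - ln (bump_lratio N \<Delta> B A r) \<partial>Q)
      = (\<integral>r. bkl (u r) (v r) \<partial>Q) + of_bool (A = B) * (real N * \<Delta>\<^sup>2 / 2)"
    using integrable_bkl[OF Q uv] integrable_integral_ln_bump_lratio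
    unfolding Q_def by (subst Bochner_Integration.integral_diff) auto
  ultimately show ?thesis
    by (simp add: algebra_simps)
qed

(* The chain rule over the remaining k rounds; c counts the plays of B in earlier rounds. *)
lemma bkl_count_scale_exp_pulls_le:
  assumes pol: "admissible_policy N K \<pi>" and T: "0 < T" and B: "B \<in> superarms N K"
  shows "h \<in> space (histM N K t) \<Longrightarrow> 0 \<le> c \<Longrightarrow> c + real k \<le> real T \<Longrightarrow>
    bkl (count_scale T (c + exp_pulls N K (bump_instance 0 B) \<pi> B k t h))
        (count_scale T (c + exp_pulls N K (bump_instance \<Delta> B) \<pi> B k t h))
      \<le> real N * \<Delta>\<^sup>2 / 2 * exp_pulls N K (bump_instance 0 B) \<pi> B k t h"
proof (induction k arbitrary: t h c)
  case 0
  then show ?case by (simp add: bkl_self)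
next
  case (Suc k)
  note h = Suc.prems(1)
  define S w where "S = superarms N K" and "w A = pmf (\<pi> t h) A" for A
  define Q l where "Q = reward_measure N (bump_instance 0 B) gauss_noise" and "l = bump_lratio N \<Delta> B"
  define m n where "m A r = exp_pulls N K (bump_instance 0 B) \<pi> B k (Suc t) (h(t := (A, r)))"
    and "n A r = exp_pulls N K (bump_instance \<Delta> B) \<pi> B k (Suc t) (h(t := (A, r)))" for A r
  define u v where "u A r = count_scale T (c + of_bool (A = B) + m A r)"
    and "v A r = count_scale T (c + of_bool (A = B) + n A r)" for A r
  define \<kappa> where "\<kappa> = real N * \<Delta>\<^sup>2 / 2"
  have S: "finite S" "B \<in> S" and w: "\<And>A. 0 \<le> w A" "sum w S = 1"
    unfolding S_def w_def using finite_superarms B admissible_policy_sum_pmf[OF pol] by auto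
  note mn = exp_pulls_after_update_measurable_bounded
    [OF pol _ h, folded S_def, where Y'="bump_instance 0 B"]
  have uv_bounds: "1/3 \<le> u A r \<and> u A r \<le> 2/3 \<and> 1/3 \<le> v A r \<and> v A r \<le> 2/3"
    if "A \<in> S" "r \<in> space (Q A)" for A r
  proof -
    have "0 \<le> m A r \<and> m A r \<le> real k" "0 \<le> n A r \<and> n A r \<le> real k"
      unfolding m_def n_def using mn(2)[OF that[unfolded Q_def]] by blast+
    then show ?thesis
      unfolding u_def v_def using Suc.prems(2,3) count_scale_between[OF T, of "c + of_bool (A = B) + _"]
      by auto
  qed
  have uv_meas: "u A \<in> borel_measurable (Q A)" "v A \<in> borel_measurable (Q A)" if "A \<in> S" for A
    unfolding u_def v_def m_def n_def count_scale_def Q_def using mn(1)[OF that] by auto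
  have "bkl (count_scale T (c + exp_pulls N K (bump_instance 0 B) \<pi> B (Suc k) t h))
            (count_scale T (c + exp_pulls N K (bump_instance \<Delta> B) \<pi> B (Suc k) t h))
      = bkl (\<Sum>A\<in>S. w A * (\<integral>r. u A r \<partial>Q A)) (\<Sum>A\<in>S. w A * (\<integral>r. l A r * v A r \<partial>Q A))"
    unfolding count_scale_exp_pulls_Suc[OF pol h, where Y="bump_instance 0 B"]
      count_scale_exp_pulls_bump_Suc[OF pol h, where \<Delta>=\<Delta>]
    unfolding S_def w_def Q_def l_def u_def v_def m_def n_def ..
  also have "\<dots> \<le> (\<Sum>A\<in>S. w A * (\<integral>r. bkl (u A r) (v A r) - ln (l A r) \<partial>Q A))"
    using integrable_integral_bump_lratio integrable_integral_ln_bump_lratio bump_lratio_pos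
    unfolding l_def Q_def
    by (intro bkl_mixture_le S w prob_space_reward_measure uv_meas[unfolded Q_def]
        uv_bounds[unfolded Q_def]) auto
  also have "\<dots> \<le> (\<Sum>A\<in>S. w A * (\<kappa> * (of_bool (A = B) + (\<integral>r. m A r \<partial>Q A))))"
  proof (intro sum_mono mult_left_mono w(1))
    fix A assume A: "A \<in> S"
    have "0 \<le> c + of_bool (A = B)" "c + of_bool (A = B) + real k \<le> real T"
      using Suc.prems(2,3) by auto
    then have "bkl (u A r) (v A r) \<le> \<kappa> * m A r" if "r \<in> space (Q A)" for r
      unfolding u_def v_def m_def n_def \<kappa>_def
      by (intro Suc.IH history_update_in_space[OF A[unfolded S_def] h that[unfolded Q_def]])
    then show "(\<integral>r. bkl (u A r) (v A r) - ln (l A r) \<partial>Q A) \<le> \<kappa> * (of_bool (A = B) + (\<integral>r. m A r \<partial>Q A))"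
      using integral_exp_pulls_after_update[OF pol A[unfolded S_def] h] uv_meas[OF A] uv_bounds[OF A]
      unfolding l_def Q_def m_def \<kappa>_def by (intro integral_bkl_sub_ln_bump_lratio_le) auto
  qed
  also have "\<dots> = \<kappa> * exp_pulls N K (bump_instance 0 B) \<pi> B (Suc k) t h"
    unfolding S_def w_def m_def Q_def by (simp add: sum_distrib_left algebra_simps)
  finally show ?case
    unfolding \<kappa>_def .
qed

section \<open>The regret lower bound\<close>

lemma le_div_add_of_sq_le:
  fixes d a s :: real
  assumes "d\<^sup>2 \<le> 4 * a" "0 \<le> a" "0 < s"
  shows "d \<le> a / s + s"
proof -
  have "(a / s + s)\<^sup>2 = (a / s - s)\<^sup>2 + 4 * a"
    using assms(3) by (simp add: power2_eq_square field_simps)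
  then have "d\<^sup>2 \<le> (a / s + s)\<^sup>2"
    using assms(1) zero_le_power2[of "a / s - s"] by linarith
  moreover have "0 \<le> a / s + s"
    using assms(2,3) by simp
  ultimately show ?thesis
    by (rule power2_le_imp_le)
qed

lemma exp_pulls_bump_le:
  assumes pol: "admissible_policy N K \<pi>" and T: "0 < T" and B: "B \<in> superarms N K" and s: "0 < s"
  defines "m \<equiv> exp_pulls N K (bump_instance 0 B) \<pi> B T 0 (\<lambda>_. undefined)"
  shows "exp_pulls N K (bump_instance \<Delta> B) \<pi> B T 0 (\<lambda>_. undefined)
           \<le> m + 3 * real T * (real N * \<Delta>\<^sup>2 / 2 * m / s + s)"
proof -
  define n where "n = exp_pulls N K (bump_instance \<Delta> B) \<pi> B T 0 (\<lambda>_. undefined)"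
  have m: "0 \<le> m \<and> m \<le> real T" and n: "0 \<le> n \<and> n \<le> real T"
    unfolding m_def n_def using exp_pulls_measurable_bounded[OF pol] undefined_in_space_histM_0 by blast+
  have "(count_scale T m - count_scale T n)\<^sup>2 / 4 \<le> bkl (count_scale T m) (count_scale T n)"
    using count_scale_between[OF T, of m] count_scale_between[OF T, of n] m n by (intro sq_diff_le_bkl) auto
  also have "\<dots> \<le> real N * \<Delta>\<^sup>2 / 2 * m"
    using bkl_count_scale_exp_pulls_le[OF pol T B undefined_in_space_histM_0, of 0 T \<Delta>]
    unfolding m_def n_def by simp
  also have "count_scale T m - count_scale T n = (m - n) / (3 * real T)"
    by (simp add: count_scale_def diff_divide_distrib)
  finally have "((m - n) / (3 * real T))\<^sup>2 \<le> 4 * (real N * \<Delta>\<^sup>2 / 2 * m)"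
    by linarith
  then have "((n - m) / (3 * real T))\<^sup>2 \<le> 4 * (real N * \<Delta>\<^sup>2 / 2 * m)"
    by (simp add: power_divide power2_commute)
  then have "(n - m) / (3 * real T) \<le> real N * \<Delta>\<^sup>2 / 2 * m / s + s"
    using m s by (intro le_div_add_of_sq_le) auto
  then show ?thesis
    unfolding n_def using T by (simp add: divide_le_eq algebra_simps)
qed

lemma exists_bump_rarely_pulled:
  assumes pol: "admissible_policy N K \<pi>" and N: "N \<ge> 1" and K: "K \<ge> 2" and T: "0 < T"
    and \<Delta>: "real N * \<Delta>\<^sup>2 * real T \<le> real K ^ N / 576"
  shows "\<exists>B\<in>superarms N K. exp_pulls N K (bump_instance \<Delta> B) \<pi> B T 0 (\<lambda>_. undefined) \<le> 3/4 * real T"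
proof (rule ccontr)
  define S M where "S = superarms N K" and "M = real K ^ N"
  define \<kappa> s :: real where "\<kappa> = real N * \<Delta>\<^sup>2 / 2" and "s = 1/48"
  define m n where "m B = exp_pulls N K (bump_instance 0 B) \<pi> B T 0 (\<lambda>_. undefined)"
    and "n B = exp_pulls N K (bump_instance \<Delta> B) \<pi> B T 0 (\<lambda>_. undefined)" for B
  have s: "0 < s"
    unfolding s_def by simp
  have "2 \<le> K ^ N"
    using K N self_le_power[of K N] by simp
  then have "2 \<le> M"
    unfolding M_def by (metis of_nat_numeral of_nat_le_iff of_nat_power)
  assume no_rare: "\<not> ?thesis"
  have "3/4 * real T * M = (\<Sum>B\<in>S. 3/4 * real T)"
    unfolding S_def M_def by (simp add: card_superarms)
  also have "\<dots> \<le> (\<Sum>B\<in>S. n B)"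
    using no_rare unfolding S_def n_def by (intro sum_mono) auto
  also have "\<dots> \<le> (\<Sum>B\<in>S. m B + 3 * real T * (\<kappa> * m B / s + s))"
    unfolding S_def m_def n_def \<kappa>_def by (intro sum_mono exp_pulls_bump_le[OF pol T _ s])
  also have "\<dots> = (1 + 3 * real T * \<kappa> / s) * (\<Sum>B\<in>S. m B) + 3 * real T * s * card S"
    by (simp add: sum.distrib sum_distrib_left sum_distrib_right sum_divide_distrib algebra_simps)
  also have "\<dots> = real T + 3 * (\<kappa> * real T) / s * real T + real T * M / 16"
    using sum_exp_pulls[OF pol undefined_in_space_histM_0, of "\<lambda>i A. 1/2" T]
    unfolding S_def M_def m_def bump_instance_zero s_def by (simp add: card_superarms algebra_simps)
  also have "3 * (\<kappa> * real T) / s \<le> M / 8"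
    using \<Delta> unfolding \<kappa>_def s_def M_def by (simp add: algebra_simps)
  finally have "3/4 * real T * M \<le> real T + M / 8 * real T + real T * M / 16"
    using T by (simp add: mult_right_mono)
  moreover have "2 * real T \<le> M * real T"
    using \<open>2 \<le> M\<close> by (intro mult_right_mono) auto
  ultimately show False
    using T by (simp add: algebra_simps)
qed

lemma gap_choice:
  fixes T N M :: real
  assumes T: "0 < T" and N: "1 \<le> N" and M: "0 \<le> M"
  defines "\<Delta> \<equiv> min (1/2) (sqrt (M / (N * T)) / 24)"
  shows "N * \<Delta>\<^sup>2 * T \<le> M / 576"
    and "1/96 * (1 / sqrt N) * min T (sqrt (M * T)) \<le> \<Delta> * T / 4"
proof -
  have "0 \<le> \<Delta>"
    unfolding \<Delta>_def using T N M by simp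
  then have "\<Delta>\<^sup>2 \<le> (sqrt (M / (N * T)) / 24)\<^sup>2"
    unfolding \<Delta>_def by (intro power_mono) auto
  also have "\<dots> = M / (N * T) / 576"
    using T N M by (simp add: power_divide)
  finally show "N * \<Delta>\<^sup>2 * T \<le> M / 576"
    using T N by (simp add: field_simps)
  have sqrt_N: "1 \<le> sqrt N"
    using N by simp
  show "1/96 * (1 / sqrt N) * min T (sqrt (M * T)) \<le> \<Delta> * T / 4"
  proof (cases "\<Delta> = 1/2")
    case True
    have "(1 / sqrt N) * min T (sqrt (M * T)) \<le> 1 * T"
      using sqrt_N T M by (intro mult_mono) (auto simp: divide_le_eq)
    moreover have "1/96 * (1 / sqrt N) * min T (sqrt (M * T)) = 1/96 * ((1 / sqrt N) * min T (sqrt (M * T)))"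
      by simp
    ultimately show ?thesis
      unfolding True using T by linarith
  next
    case False
    then have "\<Delta> * T = sqrt (M / (N * T)) * T / 24"
      unfolding \<Delta>_def by (simp add: min_def split: if_splits)
    also have "sqrt (M / (N * T)) * T = sqrt (M * T) / sqrt N"
      using T N M by (simp add: real_sqrt_divide real_sqrt_mult field_simps)
    finally have "\<Delta> * T / 4 = 1/96 * (1 / sqrt N) * sqrt (M * T)"
      by simp
    then show ?thesis
      using sqrt_N by (simp add: divide_right_mono)
  qed
qed

theorem proposition1:
  shows "\<exists>c>0. \<forall>(N::nat) (K::nat) (T::nat) (H::nat \<Rightarrow> nat \<Rightarrow> real) (\<pi>::policy).
           N \<ge> 1 \<longrightarrow> K \<ge> 2 \<longrightarrow> admissible_policy N K \<pi> \<longrightarrow>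
           (\<exists>Y P. admissible_instance N K Y P \<and>
              naive_regret N K Y P \<pi> T \<ge> c * (1 / sqrt (real N)) * min (real T) (sqrt (real K ^ N * real T)))"
proof (intro exI[of _ "1/96"] conjI allI impI)
  fix N K T :: nat and \<pi> :: policy
  assume N: "N \<ge> 1" and K: "K \<ge> 2" and pol: "admissible_policy N K \<pi>"
  define \<Delta> where "\<Delta> = min (1/2) (sqrt (real K ^ N / (real N * real T)) / 24)"
  have \<Delta>: "0 \<le> \<Delta>" "\<Delta> \<le> 1/2"
    unfolding \<Delta>_def by auto
  show "\<exists>Y P. admissible_instance N K Y P \<and>
          1/96 * (1 / sqrt (real N)) * min (real T) (sqrt (real K ^ N * real T)) \<le> naive_regret N K Y P \<pi> T"
  proof (cases "T = 0")
    case True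
    then show ?thesis
      using admissible_bump_instance[OF \<Delta>, of N K undefined] by (auto simp: naive_regret_def)
  next
    case False
    then have T: "0 < real T" by simp
    obtain B where B: "B \<in> superarms N K"
      and rare: "exp_pulls N K (bump_instance \<Delta> B) \<pi> B T 0 (\<lambda>_. undefined) \<le> 3/4 * real T"
      using exists_bump_rarely_pulled[OF pol N K] gap_choice(1)[OF T, of "real N" "real K ^ N"] N False
      unfolding \<Delta>_def by auto
    have "1/96 * (1 / sqrt (real N)) * min (real T) (sqrt (real K ^ N * real T)) \<le> \<Delta> * real T / 4"
      using gap_choice(2)[OF T, of "real N" "real K ^ N"] N unfolding \<Delta>_def by simp
    also have "\<dots> \<le> \<Delta> * (real T - exp_pulls N K (bump_instance \<Delta> B) \<pi> B T 0 (\<lambda>_. undefined))"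
      using rare mult_left_mono[OF _ \<Delta>(1), of "real T / 4"] by simp
    also have "\<dots> = naive_regret N K (bump_instance \<Delta> B) gauss_noise \<pi> T"
      by (rule naive_regret_bump_instance[OF pol N B \<Delta>(1), symmetric])
    finally show ?thesis
      using admissible_bump_instance[OF \<Delta>] by blast
  qed
qed simp

end
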